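(* Consider the linear program $$z^*=\min\Big\{c^\top x+\sum_{v\in V_+}\theta_v:\ \theta_v\ge\sum_{\xi}p_\xi w_vy^\xi_v\ \forall v;\ y^\xi(S)\ge k_\xi(S)+x(E(S))-|S|\ \forall\emptyset\ne S\subseteq V_+,\xi\in[N];\ x\in\mathcal{X};\ y\in[\mathbf 0,b]^N\Big\}.$$ Suppose it is solved to optimality, and let $\alpha^*\ge0$ and $\beta^*\le0$ be optimal dual values associated with the constraints $y^\xi(S)\ge k_\xi(S)+x(E(S))-|S|$ and the upper bound constraints $y^\xi_v\le b_v$, respectively. Then $$z^*=\min\Big\{c^\top x+\mathbf 1^\top\theta:\ x\in\mathcal{X},\ \theta\in\operatorname{proj}_\theta(\Gamma(x,\alpha^*,\beta^* ))\Big\}.$$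
   Context: $G=(V,E)$ complete undirected graph, $V=\{0\}\cup V_+$ ($V_+$ customers), edge costs $c\in\mathbb{Q}^E_{\ge0}$; capacity $C>0$; scenarios $\xi\in[N]$ with demands $d^\xi\in\mathbb{Q}^{V_+}_{\ge0}$ ($d^\xi(v)\le C$) and probabilities $p_\xi\ge0$, $\sum_\xi p_\xi=1$. $f(S)=\sum_{i\in S}f(i)$; $k_\xi(S)=\lceil d^\xi(S)/C\rceil$; $\bar d=\sum_\xi p_\xi d^\xi$. $E(S)$: edges with both ends in $S$; $\delta(S)$: edges with exactly one end in $S$. $\mathcal{X}$ is one of $\mathcal{X}_{\mathrm{sub}}=\{x\in[0,2]^E: x(\delta(v))=2\ \forall v\in V_+,\ x(E(S))\le|S|-1\ \forall\emptyset\ne S\subseteq V_+\}$ or $\mathcal{X}_{\mathrm{cvrp}}=\mathcal{X}_{\mathrm{sub}}\cap\{x:x(\delta(0))=2k,\ x(E(S))\le|S|-\lceil\bar d(S)/C\rceil\}$. Fixed $w\in\mathbb{Q}^{V_+}_{\ge0}$, $b\in\mathbb{Z}^{V_+}_{\ge0}$; $y\in\mathbb{R}^{[N]\times V_+}$ has entries $y^\xi_v$; $[\mathbf 0,b]^N=\{y:0\le y^\xi_v\le b_v\}$. For multipliers $\alpha=(\alpha^\xi_S)\ge0$, $\beta=(\beta^\xi_v)\le0$: $\nu(\alpha,\beta)=\sum_\xi\sum_S\alpha^\xi_S(k_\xi(S)-|S|)+\sum_\xi\sum_v\beta^\xi_vb_v$, and for $x\in\mathcal{X}$, $\Gamma(x,\alpha,\beta)$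 is the set of $(\theta,y)\in\mathbb{R}^{V_+}_{\ge0}\times[\mathbf 0,b]^N$ with $\sum_\xi\sum_v(\beta^\xi_v+\sum_{S\ni v}\alpha^\xi_S)y^\xi_v\ge\sum_\xi\sum_S\alpha^\xi_Sx(E(S))+\nu(\alpha,\beta)$ and $\theta_v\ge\sum_\xi p_\xi w_vy^\xi_v$ for all $v$; $\operatorname{proj}_\theta$ is projection onto $\theta$. *)

theory Defs
  imports Complex_Main
begin

definition is_min :: "real set \<Rightarrow> real \<Rightarrow> bool" where
  "is_min A z = (z \<in> A \<and> (\<forall>a\<in>A. z \<le> a))"

section \<open>A generic linear program (all variables free, sign bounds are rows)\<close>

datatype sense = Ge | Le | Eq

fun sat :: "sense \<Rightarrow> real \<Rightarrow> real \<Rightarrow> bool" where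
  "sat Ge a r = (a \<ge> r)"
| "sat Le a r = (a \<le> r)"
| "sat Eq a r = (a = r)"

definition lp_feasible ::
  "'i set \<Rightarrow> ('i \<Rightarrow> ('j \<Rightarrow> real) \<Rightarrow> real) \<Rightarrow> ('i \<Rightarrow> sense) \<Rightarrow> ('i \<Rightarrow> real)
   \<Rightarrow> ('j \<Rightarrow> real) \<Rightarrow> bool" where
  "lp_feasible Rows lhs sns rhs u = (\<forall>i\<in>Rows. sat (sns i) (lhs i u) (rhs i))"

definition lp_obj :: "'j set \<Rightarrow> ('j \<Rightarrow> real) \<Rightarrow> ('j \<Rightarrow> real) \<Rightarrow> real" where
  "lp_obj Vars cost u = (\<Sum>j\<in>Vars. cost j * u j)"

definition lp_opt_value ::
  "'j set \<Rightarrow> 'i set \<Rightarrow> ('i \<Rightarrow> ('j \<Rightarrow> real) \<Rightarrow> real) \<Rightarrow> ('i \<Rightarrow> sense) \<Rightarrow> ('i \<Rightarrow> real)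
   \<Rightarrow> ('j \<Rightarrow> real) \<Rightarrow> real \<Rightarrow> bool" where
  "lp_opt_value Vars Rows lhs sns rhs cost z =
     is_min {lp_obj Vars cost u | u. lp_feasible Rows lhs sns rhs u} z"

definition lp_coef :: "('i \<Rightarrow> ('j \<Rightarrow> real) \<Rightarrow> real) \<Rightarrow> 'i \<Rightarrow> 'j \<Rightarrow> real" where
  "lp_coef lhs i j = lhs i (\<lambda>j'. if j' = j then 1 else 0)"

definition dual_feasible ::
  "'j set \<Rightarrow> 'i set \<Rightarrow> ('i \<Rightarrow> ('j \<Rightarrow> real) \<Rightarrow> real) \<Rightarrow> ('i \<Rightarrow> sense)
   \<Rightarrow> ('j \<Rightarrow> real) \<Rightarrow> ('i \<Rightarrow> real) \<Rightarrow> bool" where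
  "dual_feasible Vars Rows lhs sns cost lam =
     ((\<forall>i\<in>Rows. (sns i = Ge \<longrightarrow> lam i \<ge> 0) \<and> (sns i = Le \<longrightarrow> lam i \<le> 0)) \<and>
      (\<forall>j\<in>Vars. (\<Sum>i\<in>Rows. lam i * lp_coef lhs i j) = cost j))"

definition dual_obj :: "'i set \<Rightarrow> ('i \<Rightarrow> real) \<Rightarrow> ('i \<Rightarrow> real) \<Rightarrow> real" where
  "dual_obj Rows rhs lam = (\<Sum>i\<in>Rows. lam i * rhs i)"

definition dual_optimal ::
  "'j set \<Rightarrow> 'i set \<Rightarrow> ('i \<Rightarrow> ('j \<Rightarrow> real) \<Rightarrow> real) \<Rightarrow> ('i \<Rightarrow> sense) \<Rightarrow> ('i \<Rightarrow> real)
   \<Rightarrow> ('j \<Rightarrow> real) \<Rightarrow> ('i \<Rightarrow> real) \<Rightarrow> bool" where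
  "dual_optimal Vars Rows lhs sns rhs cost lam =
     (dual_feasible Vars Rows lhs sns cost lam \<and>
      (\<forall>mu. dual_feasible Vars Rows lhs sns cost mu \<longrightarrow> dual_obj Rows rhs mu \<le> dual_obj Rows rhs lam))"

text \<open>Vertices \<open>V = {0..n}\<close>, depot \<open>0\<close>, customers \<open>V\<^sub>+ = {1..n}\<close>;
  complete graph, edges are 2-element subsets of \<open>V\<close>; scenarios \<open>[N] = {1..N}\<close>.\<close>

definition Vp :: "nat \<Rightarrow> nat set" where "Vp n = {1..n}"
definition Edges :: "nat \<Rightarrow> nat set set" where
  "Edges n = {e. e \<subseteq> {0..n} \<and> card e = 2}"
definition inE :: "nat \<Rightarrow> nat set \<Rightarrow> nat set set" where
  "inE n S = {e \<in> Edges n. e \<subseteq> S}"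
definition delta :: "nat \<Rightarrow> nat set \<Rightarrow> nat set set" where
  "delta n S = {e \<in> Edges n. card (e \<inter> S) = 1}"
definition nsub :: "nat \<Rightarrow> nat set set" where
  "nsub n = {S. S \<subseteq> Vp n \<and> S \<noteq> {}}"
definition scen :: "nat \<Rightarrow> nat set" where "scen N = {1..N}"

text \<open>\<open>d \<xi> v\<close> = demand of customer \<open>v\<close> in scenario \<open>\<xi>\<close>.\<close>
definition kxi :: "real \<Rightarrow> (nat \<Rightarrow> nat \<Rightarrow> real) \<Rightarrow> nat \<Rightarrow> nat set \<Rightarrow> int" where
  "kxi C d \<xi> S = \<lceil>(\<Sum>v\<in>S. d \<xi> v) / C\<rceil>"

definition dbar :: "nat \<Rightarrow> (nat \<Rightarrow> real) \<Rightarrow> (nat \<Rightarrow> nat \<Rightarrow> real) \<Rightarrow> nat \<Rightarrow> real" where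
  "dbar N p d v = (\<Sum>\<xi>\<in>scen N. p \<xi> * d \<xi> v)"

definition X_sub :: "nat \<Rightarrow> (nat set \<Rightarrow> real) \<Rightarrow> bool" where
  "X_sub n x =
    ((\<forall>e\<in>Edges n. 0 \<le> x e \<and> x e \<le> 2) \<and>
     (\<forall>v\<in>Vp n. (\<Sum>e\<in>delta n {v}. x e) = 2) \<and>
     (\<forall>S\<in>nsub n. (\<Sum>e\<in>inE n S. x e) \<le> real (card S) - 1))"

definition X_cvrp :: "nat \<Rightarrow> nat \<Rightarrow> real \<Rightarrow> (nat \<Rightarrow> real) \<Rightarrow> (nat \<Rightarrow> nat \<Rightarrow> real) \<Rightarrow> nat
    \<Rightarrow> (nat set \<Rightarrow> real) \<Rightarrow> bool" where
  "X_cvrp n N C p d k x =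
    (X_sub n x \<and> (\<Sum>e\<in>delta n {0}. x e) = 2 * real k \<and>
     (\<forall>S\<in>nsub n. (\<Sum>e\<in>inE n S. x e) \<le>
                   real (card S) - of_int \<lceil>(\<Sum>v\<in>S. dbar N p d v) / C\<rceil>))"

definition Xset :: "bool \<Rightarrow> nat \<Rightarrow> nat \<Rightarrow> real \<Rightarrow> (nat \<Rightarrow> real) \<Rightarrow> (nat \<Rightarrow> nat \<Rightarrow> real) \<Rightarrow> nat
    \<Rightarrow> (nat set \<Rightarrow> real) \<Rightarrow> bool" where
  "Xset cvrp n N C p d k x = (if cvrp then X_cvrp n N C p d k x else X_sub n x)"

datatype var = VX "nat set" | VT nat | VY nat nat   (* x_e, theta_v, y^xi_v *)

datatype row =
    RTh nat              (* theta_v >= sum_xi p_xi w_v y^xi_v *)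
  | RCap nat "nat set"   (* y^xi(S) >= k_xi(S) + x(E(S)) - |S| *)
  | RYlo nat nat         (* y^xi_v >= 0 *)
  | RYup nat nat         (* y^xi_v <= b_v *)
  | RXlo "nat set"       (* x_e >= 0 *)
  | RXup "nat set"       (* x_e <= 2 *)
  | RDeg nat             (* x(delta(v)) = 2 *)
  | RSec "nat set"       (* x(E(S)) <= |S| - 1 *)
  | RDep                 (* x(delta(0)) = 2k   (cvrp only) *)
  | RRci "nat set"       (* x(E(S)) <= |S| - ceil(dbar(S)/C)  (cvrp only) *)

definition lp_vars :: "nat \<Rightarrow> nat \<Rightarrow> var set" where
  "lp_vars n N = VX ` Edges n \<union> VT ` Vp n \<union> {VY \<xi> v |\<xi> v. \<xi> \<in> scen N \<and> v \<in> Vp n}"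

definition lp_rows :: "bool \<Rightarrow> nat \<Rightarrow> nat \<Rightarrow> row set" where
  "lp_rows cvrp n N =
     RTh ` Vp n \<union> {RCap \<xi> S |\<xi> S. \<xi> \<in> scen N \<and> S \<in> nsub n}
     \<union> {RYlo \<xi> v |\<xi> v. \<xi> \<in> scen N \<and> v \<in> Vp n} \<union> {RYup \<xi> v |\<xi> v. \<xi> \<in> scen N \<and> v \<in> Vp n}
     \<union> RXlo ` Edges n \<union> RXup ` Edges n \<union> RDeg ` Vp n \<union> RSec ` nsub n
     \<union> (if cvrp then {RDep} \<union> RRci ` nsub n else {})"

fun lp_lhs :: "nat \<Rightarrow> nat \<Rightarrow> (nat \<Rightarrow> real) \<Rightarrow> (nat \<Rightarrow> real) \<Rightarrow> row \<Rightarrow> (var \<Rightarrow> real) \<Rightarrow> real" where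
  "lp_lhs n N p w (RTh v) u = u (VT v) - (\<Sum>\<xi>\<in>scen N. p \<xi> * w v * u (VY \<xi> v))"
| "lp_lhs n N p w (RCap \<xi> S) u = (\<Sum>v\<in>S. u (VY \<xi> v)) - (\<Sum>e\<in>inE n S. u (VX e))"
| "lp_lhs n N p w (RYlo \<xi> v) u = u (VY \<xi> v)"
| "lp_lhs n N p w (RYup \<xi> v) u = u (VY \<xi> v)"
| "lp_lhs n N p w (RXlo e) u = u (VX e)"
| "lp_lhs n N p w (RXup e) u = u (VX e)"
| "lp_lhs n N p w (RDeg v) u = (\<Sum>e\<in>delta n {v}. u (VX e))"
| "lp_lhs n N p w (RSec S) u = (\<Sum>e\<in>inE n S. u (VX e))"
| "lp_lhs n N p w RDep u = (\<Sum>e\<in>delta n {0}. u (VX e))"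
| "lp_lhs n N p w (RRci S) u = (\<Sum>e\<in>inE n S. u (VX e))"

fun lp_sense :: "row \<Rightarrow> sense" where
  "lp_sense (RTh v) = Ge"
| "lp_sense (RCap \<xi> S) = Ge"
| "lp_sense (RYlo \<xi> v) = Ge"
| "lp_sense (RYup \<xi> v) = Le"
| "lp_sense (RXlo e) = Ge"
| "lp_sense (RXup e) = Le"
| "lp_sense (RDeg v) = Eq"
| "lp_sense (RSec S) = Le"
| "lp_sense RDep = Eq"
| "lp_sense (RRci S) = Le"

fun lp_rhs :: "nat \<Rightarrow> real \<Rightarrow> (nat \<Rightarrow> real) \<Rightarrow> (nat \<Rightarrow> nat \<Rightarrow> real) \<Rightarrow> (nat \<Rightarrow> nat) \<Rightarrow> nat
    \<Rightarrow> row \<Rightarrow> real" where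
  "lp_rhs N C p d b k (RTh v) = 0"
| "lp_rhs N C p d b k (RCap \<xi> S) = of_int (kxi C d \<xi> S) - real (card S)"
| "lp_rhs N C p d b k (RYlo \<xi> v) = 0"
| "lp_rhs N C p d b k (RYup \<xi> v) = real (b v)"
| "lp_rhs N C p d b k (RXlo e) = 0"
| "lp_rhs N C p d b k (RXup e) = 2"
| "lp_rhs N C p d b k (RDeg v) = 2"
| "lp_rhs N C p d b k (RSec S) = real (card S) - 1"
| "lp_rhs N C p d b k RDep = 2 * real k"
| "lp_rhs N C p d b k (RRci S) = real (card S) - of_int \<lceil>(\<Sum>v\<in>S. dbar N p d v) / C\<rceil>"

fun lp_cost :: "(nat set \<Rightarrow> real) \<Rightarrow> var \<Rightarrow> real" where
  "lp_cost c (VX e) = c e"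
| "lp_cost c (VT v) = 1"
| "lp_cost c (VY \<xi> v) = 0"

definition nu :: "nat \<Rightarrow> nat \<Rightarrow> real \<Rightarrow> (nat \<Rightarrow> nat \<Rightarrow> real) \<Rightarrow> (nat \<Rightarrow> nat)
    \<Rightarrow> (nat \<Rightarrow> nat set \<Rightarrow> real) \<Rightarrow> (nat \<Rightarrow> nat \<Rightarrow> real) \<Rightarrow> real" where
  "nu n N C d b \<alpha> \<beta> =
     (\<Sum>\<xi>\<in>scen N. \<Sum>S\<in>nsub n. \<alpha> \<xi> S * (of_int (kxi C d \<xi> S) - real (card S)))
   + (\<Sum>\<xi>\<in>scen N. \<Sum>v\<in>Vp n. \<beta> \<xi> v * real (b v))"

definition Gamma :: "nat \<Rightarrow> nat \<Rightarrow> real \<Rightarrow> (nat \<Rightarrow> real) \<Rightarrow> (nat \<Rightarrow> nat \<Rightarrow> real) \<Rightarrow> (nat \<Rightarrow> real)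
    \<Rightarrow> (nat \<Rightarrow> nat) \<Rightarrow> (nat \<Rightarrow> nat set \<Rightarrow> real) \<Rightarrow> (nat \<Rightarrow> nat \<Rightarrow> real) \<Rightarrow> (nat set \<Rightarrow> real)
    \<Rightarrow> ((nat \<Rightarrow> real) \<times> (nat \<Rightarrow> nat \<Rightarrow> real)) set" where
  "Gamma n N C p d w b \<alpha> \<beta> x =
     {(\<theta>, y). (\<forall>v\<in>Vp n. 0 \<le> \<theta> v) \<and>
              (\<forall>\<xi>\<in>scen N. \<forall>v\<in>Vp n. 0 \<le> y \<xi> v \<and> y \<xi> v \<le> real (b v)) \<and>
              (\<Sum>\<xi>\<in>scen N. \<Sum>v\<in>Vp n. (\<beta> \<xi> v + (\<Sum>S\<in>{S\<in>nsub n. v \<in> S}. \<alpha> \<xi> S)) * y \<xi> v)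
                \<ge> (\<Sum>\<xi>\<in>scen N. \<Sum>S\<in>nsub n. \<alpha> \<xi> S * (\<Sum>e\<in>inE n S. x e)) + nu n N C d b \<alpha> \<beta> \<and>
              (\<forall>v\<in>Vp n. \<theta> v \<ge> (\<Sum>\<xi>\<in>scen N. p \<xi> * w v * y \<xi> v))}"

end

theory Submission
  imports Defs
begin

text \<open>An optimal solution \<open>(x, \<theta>, y)\<close> of the LP lies in \<open>\<Gamma>(x, \<alpha>\<^sup>*, \<beta>\<^sup>*)\<close>: the
  aggregated constraint of \<open>\<Gamma>\<close> is the \<open>\<alpha>\<^sup>*\<close>,\<open>\<beta>\<^sup>*\<close>-weighted sum of the capacity rows and the
  upper bounds \<open>y \<le> b\<close>, and every weighted slack is nonnegative; so \<open>z\<^sup>*\<close> is attained.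
  Conversely, since \<open>A\<^sup>T \<lambda>\<^sup>* = cost\<close> for the optimal dual \<open>\<lambda>\<^sup>*\<close>, the cost of any point equals
  the dual objective plus the \<open>\<lambda>\<^sup>*\<close>-weighted slacks of all rows. For \<open>x \<in> \<X>\<close> and
  \<open>(\<theta>, y) \<in> \<Gamma>\<close> all other rows hold, and the weighted slacks of the capacity and upper-bound
  rows add up to the slack of the aggregated constraint. Hence the cost is at least the dual
  optimum, which is \<open>z\<^sup>*\<close> by strong duality. Strong duality is derived from Farkas' lemma,
  proved by Fourier--Motzkin elimination.\<close>

section \<open>Farkas' lemma by Fourier--Motzkin elimination\<close>

text \<open>A pair \<open>(a, r)\<close> stands for the linear inequality \<open>r \<le> (\<Sum>j. a j * u j)\<close> in the
  unknowns \<open>u\<close>; \<open>ineq_cone G\<close> consists of the nonnegative combinations of those in \<open>G\<close>.\<close>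

inductive_set ineq_cone :: "(('j \<Rightarrow> real) \<times> real) set \<Rightarrow> (('j \<Rightarrow> real) \<times> real) set"
  for G where
  base: "g \<in> G \<Longrightarrow> g \<in> ineq_cone G"
| zero: "(\<lambda>j. 0, 0) \<in> ineq_cone G"
| add: "(a, r) \<in> ineq_cone G \<Longrightarrow> (b, s) \<in> ineq_cone G \<Longrightarrow> (\<lambda>j. a j + b j, r + s) \<in> ineq_cone G"
| scale: "(a, r) \<in> ineq_cone G \<Longrightarrow> 0 \<le> c \<Longrightarrow> (\<lambda>j. c * a j, c * r) \<in> ineq_cone G"

lemma ineq_cone_subset_ineq_cone:
  assumes "g \<in> ineq_cone H" "H \<subseteq> ineq_cone G"
  shows "g \<in> ineq_cone G"
  using assms(1) by induction (use assms(2) in \<open>auto intro: ineq_cone.intros\<close>)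

lemma ineq_cone_coeff_zero:
  assumes "g \<in> ineq_cone G" "\<forall>h\<in>G. fst h j = 0"
  shows "fst g j = 0"
  using assms(1) by induction (use assms(2) in auto)

lemma ineq_cone_image_nonneg_combination:
  assumes "g \<in> ineq_cone (h ` I)" "finite I"
  shows "\<exists>l. (\<forall>i\<in>I. 0 \<le> l i) \<and> fst g = (\<lambda>j. \<Sum>i\<in>I. l i * fst (h i) j)
             \<and> snd g = (\<Sum>i\<in>I. l i * snd (h i))"
  using assms(1)
proof induction
  case (base g)
  then obtain i0 where i0: "i0 \<in> I" "g = h i0" by auto
  have "(\<Sum>i\<in>I. of_bool (i = i0) * f i) = f i0" for f :: "_ \<Rightarrow> real"
    using i0(1) assms(2) by (simp add: if_distrib if_distribR sum.delta)
  then show ?case using i0 by (intro exI[of _ "\<lambda>i. of_bool (i = i0)"]) auto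
next
  case zero
  show ?case by (intro exI[of _ "\<lambda>i. 0"]) auto
next
  case (add a r b s)
  then obtain l1 l2 where "\<forall>i\<in>I. 0 \<le> l1 i" "a = (\<lambda>j. \<Sum>i\<in>I. l1 i * fst (h i) j)"
      "r = (\<Sum>i\<in>I. l1 i * snd (h i))"
    and "\<forall>i\<in>I. 0 \<le> l2 i" "b = (\<lambda>j. \<Sum>i\<in>I. l2 i * fst (h i) j)"
      "s = (\<Sum>i\<in>I. l2 i * snd (h i))" by auto
  then show ?case
    by (intro exI[of _ "\<lambda>i. l1 i + l2 i"]) (auto simp: algebra_simps sum.distrib)
next
  case (scale a r c)
  then obtain l where "\<forall>i\<in>I. 0 \<le> l i" "a = (\<lambda>j. \<Sum>i\<in>I. l i * fst (h i) j)"
      "r = (\<Sum>i\<in>I. l i * snd (h i))" by auto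
  then show ?case
    using scale.hyps(2) by (intro exI[of _ "\<lambda>i. c * l i"]) (auto simp: algebra_simps sum_distrib_left)
qed

definition fm_combine :: "'j \<Rightarrow> ('j \<Rightarrow> real) \<times> real \<Rightarrow> ('j \<Rightarrow> real) \<times> real \<Rightarrow> ('j \<Rightarrow> real) \<times> real" where
  "fm_combine j p q = (\<lambda>i. - fst q j * fst p i + fst p j * fst q i, - fst q j * snd p + fst p j * snd q)"

definition fm_eliminate :: "'j \<Rightarrow> (('j \<Rightarrow> real) \<times> real) set \<Rightarrow> (('j \<Rightarrow> real) \<times> real) set" where
  "fm_eliminate j R = {g \<in> R. fst g j = 0} \<union>
     {fm_combine j p q | p q. p \<in> R \<and> q \<in> R \<and> 0 < fst p j \<and> fst q j < 0}"

lemma finite_fm_eliminate: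
  assumes "finite R"
  shows "finite (fm_eliminate j R)"
proof -
  have "fm_eliminate j R \<subseteq> R \<union> case_prod (fm_combine j) ` (R \<times> R)"
    unfolding fm_eliminate_def by auto
  then show ?thesis by (rule finite_subset) (use assms in auto)
qed

lemma fm_eliminate_subset_ineq_cone: "fm_eliminate j R \<subseteq> ineq_cone R"
proof
  fix g assume "g \<in> fm_eliminate j R"
  then consider "g \<in> R"
    | p q where "p \<in> R" "q \<in> R" "0 < fst p j" "fst q j < 0" "g = fm_combine j p q"
    unfolding fm_eliminate_def by auto
  then show "g \<in> ineq_cone R"
  proof cases
    case 1
    then show ?thesis by (rule ineq_cone.base)
  next
    case 2
    then have "(fst p, snd p) \<in> ineq_cone R" "(fst q, snd q) \<in> ineq_cone R"
      by (auto intro: ineq_cone.base)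
    then show ?thesis
      unfolding 2 fm_combine_def using 2 by (intro ineq_cone.add ineq_cone.scale) auto
  qed
qed

lemma fm_eliminate_coeff_zero: "g \<in> fm_eliminate j R \<Longrightarrow> fst g j = 0"
  unfolding fm_eliminate_def fm_combine_def by auto

lemma finite_sets_separated:
  fixes A B :: "'a :: linorder set"
  assumes "finite A" "finite B" "\<forall>a\<in>A. \<forall>b\<in>B. a \<le> b"
  obtains t where "\<forall>a\<in>A. a \<le> t" "\<forall>b\<in>B. t \<le> b"
proof (cases "A = {}")
  case True
  then show ?thesis using that[of "if B = {} then undefined else Min B"] assms(2) by auto
next
  case False
  then show ?thesis using that[of "Max A"] assms by auto
qed

lemma fm_combine_bounds_ordered:
  fixes u :: "'j \<Rightarrow> real" and Js :: "'j set"
  defines "S g \<equiv> \<Sum>i\<in>Js. fst g i * u i"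
  assumes "0 < fst p j" "fst q j < 0" and comb: "snd (fm_combine j p q) \<le> S (fm_combine j p q)"
  shows "(snd p - S p) / fst p j \<le> (snd q - S q) / fst q j"
proof -
  have "S (fm_combine j p q) = (\<Sum>i\<in>Js. - fst q j * (fst p i * u i) + fst p j * (fst q i * u i))"
    unfolding fm_combine_def S_def by (intro sum.cong) (simp_all add: algebra_simps)
  then have "S (fm_combine j p q) = - fst q j * S p + fst p j * S q"
    unfolding S_def by (simp only: sum.distrib sum_distrib_left)
  then have "- fst q j * (snd p - S p) \<le> fst p j * - (snd q - S q)"
    using comb by (simp add: fm_combine_def algebra_simps)
  moreover have "x / a \<le> y / b" if "0 < a" "b < 0" "- b * x \<le> a * - y" for a b x y :: real
    using that by (simp add: divide_le_eq neg_le_divide_eq mult.commute)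
  ultimately show ?thesis using assms(2,3) by blast
qed

lemma fm_eliminate_solution_extends:
  fixes u :: "'j \<Rightarrow> real"
  assumes "finite R" "finite Js" "j \<notin> Js"
    and u: "\<forall>g\<in>fm_eliminate j R. snd g \<le> (\<Sum>i\<in>Js. fst g i * u i)"
  shows "\<exists>t. \<forall>g\<in>R. snd g \<le> (\<Sum>i\<in>insert j Js. fst g i * (u(j := t)) i)"
proof -
  define S where "S g = (\<Sum>i\<in>Js. fst g i * u i)" for g :: "('j \<Rightarrow> real) \<times> real"
  \<comment> \<open>the bound that \<open>g\<close> imposes on the value \<open>t\<close> of the unknown \<open>j\<close>: from below if
    \<open>fst g j > 0\<close>, from above if \<open>fst g j < 0\<close>\<close>
  define L where "L g = (snd g - S g) / fst g j" for g
  let ?P = "{p \<in> R. 0 < fst p j}" and ?Q = "{q \<in> R. fst q j < 0}"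
  have extend: "(\<Sum>i\<in>insert j Js. fst g i * (u(j := t)) i) = fst g j * t + S g" for g t
  proof -
    have "(\<Sum>i\<in>Js. fst g i * (u(j := t)) i) = S g"
      unfolding S_def using assms(3) by (intro sum.cong) auto
    then show ?thesis using assms(2,3) by simp
  qed
  have "L p \<le> L q" if "p \<in> ?P" "q \<in> ?Q" for p q
  proof -
    have "fm_combine j p q \<in> fm_eliminate j R" using that unfolding fm_eliminate_def by blast
    then show ?thesis
      using u that fm_combine_bounds_ordered[where Js = Js and u = u] unfolding L_def S_def by auto
  qed
  then have sep: "\<forall>a\<in>L ` ?P. \<forall>b\<in>L ` ?Q. a \<le> b" by blast
  have "finite (L ` ?P)" "finite (L ` ?Q)" using assms(1) by simp_all
  from finite_sets_separated[OF this sep]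
  obtain t where tP: "\<forall>a\<in>L ` ?P. a \<le> t" and tQ: "\<forall>b\<in>L ` ?Q. t \<le> b" .
  have "snd g \<le> fst g j * t + S g" if g: "g \<in> R" for g
  proof (cases "fst g j" "0::real" rule: linorder_cases)
    case less
    then have "t \<le> L g" using tQ g by blast
    then have "snd g - S g \<le> t * fst g j" using less by (simp add: L_def neg_le_divide_eq)
    then show ?thesis by (simp add: algebra_simps)
  next
    case equal
    then have "g \<in> fm_eliminate j R" using g unfolding fm_eliminate_def by blast
    then show ?thesis using u equal by (simp add: S_def)
  next
    case greater
    then have "L g \<le> t" using tP g by blast
    then have "snd g - S g \<le> t * fst g j" using greater by (simp add: L_def pos_divide_le_eq)
    then show ?thesis by (simp add: algebra_simps)
  qed
  then show ?thesis unfolding extend by blast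
qed

lemma infeasible_ineq_system_certificate:
  assumes "finite Js" "finite R"
    and "\<nexists>u. \<forall>g\<in>R. snd g \<le> (\<Sum>j\<in>Js. fst g j * u j)"
  shows "\<exists>g\<in>ineq_cone R. (\<forall>j\<in>Js. fst g j = 0) \<and> 0 < snd g"
  using assms
proof (induction Js arbitrary: R rule: finite_induct)
  case empty
  then show ?case by (force intro: ineq_cone.base)
next
  case (insert j Js R)
  have "\<nexists>u. \<forall>g\<in>fm_eliminate j R. snd g \<le> (\<Sum>i\<in>Js. fst g i * u i)"
    using fm_eliminate_solution_extends[OF insert.prems(1) insert.hyps(1,2)] insert.prems(2)
    by blast
  then obtain g where g: "g \<in> ineq_cone (fm_eliminate j R)" "\<forall>i\<in>Js. fst g i = 0" "0 < snd g"
    using insert.IH finite_fm_eliminate[OF insert.prems(1)] by blast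
  have "g \<in> ineq_cone R"
    using ineq_cone_subset_ineq_cone[OF g(1) fm_eliminate_subset_ineq_cone] .
  moreover have "fst g j = 0"
    by (rule ineq_cone_coeff_zero[OF g(1)]) (simp add: fm_eliminate_coeff_zero)
  ultimately show ?case using g by auto
qed

lemma farkas_lemma:
  fixes a :: "'i \<Rightarrow> 'j \<Rightarrow> real" and r :: "'i \<Rightarrow> real"
  assumes "finite Js" "finite I"
    and "\<nexists>u. \<forall>i\<in>I. r i \<le> (\<Sum>j\<in>Js. a i j * u j)"
  shows "\<exists>l. (\<forall>i\<in>I. 0 \<le> l i) \<and> (\<forall>j\<in>Js. (\<Sum>i\<in>I. l i * a i j) = 0) \<and> 0 < (\<Sum>i\<in>I. l i * r i)"
proof -
  let ?h = "\<lambda>i. (a i, r i)"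
  obtain g where g: "g \<in> ineq_cone (?h ` I)" "\<forall>j\<in>Js. fst g j = 0" "0 < snd g"
    using infeasible_ineq_system_certificate[of Js "?h ` I"] assms by auto
  then show ?thesis
    using ineq_cone_image_nonneg_combination[OF g(1) assms(2)] by auto
qed

section \<open>Linear programming duality\<close>

definition linear_rows :: "'j set \<Rightarrow> 'i set \<Rightarrow> ('i \<Rightarrow> ('j \<Rightarrow> real) \<Rightarrow> real) \<Rightarrow> bool" where
  "linear_rows Vars Rows lhs \<longleftrightarrow> (\<forall>i\<in>Rows. \<forall>u. lhs i u = (\<Sum>j\<in>Vars. lp_coef lhs i j * u j))"

lemma linear_form_expansion:
  fixes L :: "('j \<Rightarrow> real) \<Rightarrow> real"
  assumes "finite V"
    and local: "\<And>u u'. (\<forall>j\<in>V. u j = u' j) \<Longrightarrow> L u = L u'"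
    and add: "\<And>u u'. L (\<lambda>j. u j + u' j) = L u + L u'"
    and scale: "\<And>c u. L (\<lambda>j. c * u j) = c * L u"
  shows "L u = (\<Sum>j\<in>V. L (\<lambda>j'. if j' = j then 1 else 0) * u j)"
proof -
  have L_sum: "L (\<lambda>j'. \<Sum>k\<in>A. f k j') = (\<Sum>k\<in>A. L (f k))" if "finite A" for A f
    using that
  proof induction
    case empty
    show ?case using scale[of 0] by simp
  next
    case (insert k A)
    then show ?case using add[of "f k"] by simp
  qed
  have "L u = L (\<lambda>j'. \<Sum>k\<in>V. u k * (if j' = k then 1 else 0))"
    using assms(1) by (intro local) (simp add: if_distrib cong: if_cong)
  also have "\<dots> = (\<Sum>k\<in>V. L (\<lambda>j'. if j' = k then 1 else 0) * u k)"
    using L_sum[OF assms(1)] scale by (simp add: mult.commute)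
  finally show ?thesis .
qed

definition dual_sign_ok :: "sense \<Rightarrow> real \<Rightarrow> bool" where
  "dual_sign_ok s l \<longleftrightarrow> (s = Ge \<longrightarrow> 0 \<le> l) \<and> (s = Le \<longrightarrow> l \<le> 0)"

lemma dual_feasible_iff:
  "dual_feasible Vars Rows lhs sns cost lam \<longleftrightarrow>
     (\<forall>i\<in>Rows. dual_sign_ok (sns i) (lam i)) \<and> (\<forall>j\<in>Vars. (\<Sum>i\<in>Rows. lam i * lp_coef lhs i j) = cost j)"
  unfolding dual_feasible_def dual_sign_ok_def ..

lemma dual_sign_ok_slack_nonneg: "dual_sign_ok s l \<Longrightarrow> sat s a r \<Longrightarrow> 0 \<le> l * (a - r)"
  by (cases s) (auto simp: dual_sign_ok_def mult_nonpos_nonpos)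

lemma linear_rows_combination:
  assumes "linear_rows Vars Rows lhs"
  shows "(\<Sum>i\<in>Rows. mu i * lhs i u) = (\<Sum>j\<in>Vars. (\<Sum>i\<in>Rows. mu i * lp_coef lhs i j) * u j)"
proof -
  have "(\<Sum>i\<in>Rows. mu i * lhs i u) = (\<Sum>i\<in>Rows. \<Sum>j\<in>Vars. mu i * lp_coef lhs i j * u j)"
    using assms unfolding linear_rows_def by (simp add: sum_distrib_left mult.assoc)
  also have "\<dots> = (\<Sum>j\<in>Vars. (\<Sum>i\<in>Rows. mu i * lp_coef lhs i j) * u j)"
    by (subst sum.swap) (simp add: sum_distrib_right)
  finally show ?thesis .
qed

lemma lagrangian_identity:
  assumes "linear_rows Vars Rows lhs" "dual_feasible Vars Rows lhs sns cost lam"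
  shows "lp_obj Vars cost u = dual_obj Rows rhs lam + (\<Sum>i\<in>Rows. lam i * (lhs i u - rhs i))"
proof -
  have "lp_obj Vars cost u = (\<Sum>i\<in>Rows. lam i * lhs i u)"
    using assms unfolding linear_rows_combination[OF assms(1)] lp_obj_def dual_feasible_iff
    by (intro sum.cong) auto
  then show ?thesis
    unfolding dual_obj_def by (simp add: right_diff_distrib sum_subtractf)
qed

lemma weak_duality:
  assumes "linear_rows Vars Rows lhs" "dual_feasible Vars Rows lhs sns cost lam"
    and "lp_feasible Rows lhs sns rhs u"
  shows "dual_obj Rows rhs lam \<le> lp_obj Vars cost u"
proof -
  have "0 \<le> (\<Sum>i\<in>Rows. lam i * (lhs i u - rhs i))"
    using assms(2,3) unfolding dual_feasible_iff lp_feasible_def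
    by (intro sum_nonneg) (auto intro: dual_sign_ok_slack_nonneg)
  then show ?thesis using lagrangian_identity[OF assms(1,2), where u=u and rhs=rhs] by linarith
qed

fun sense_signs :: "sense \<Rightarrow> real set" where
  "sense_signs Ge = {1}"
| "sense_signs Le = {-1}"
| "sense_signs Eq = {1, -1}"

lemma finite_sense_signs [simp]: "finite (sense_signs s)"
  by (cases s) auto

lemma sat_iff_signed: "sat s a r \<longleftrightarrow> (\<forall>\<sigma>\<in>sense_signs s. \<sigma> * r \<le> \<sigma> * a)"
  by (cases s) auto

lemma dual_sign_ok_signed_sum:
  "\<forall>\<sigma>\<in>sense_signs s. 0 \<le> l \<sigma> \<Longrightarrow> dual_sign_ok s (\<Sum>\<sigma>\<in>sense_signs s. l \<sigma> * \<sigma>)"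
  by (cases s) (auto simp: dual_sign_ok_def)

lemma lp_farkas:
  assumes "finite Vars" "finite Rows" "linear_rows Vars Rows lhs"
    and above: "\<forall>u. lp_feasible Rows lhs sns rhs u \<longrightarrow> t < lp_obj Vars cost u"
  obtains l0 mu where "0 \<le> l0" "\<forall>i\<in>Rows. dual_sign_ok (sns i) (mu i)"
    "\<forall>j\<in>Vars. (\<Sum>i\<in>Rows. mu i * lp_coef lhs i j) = l0 * cost j"
    "l0 * t < (\<Sum>i\<in>Rows. mu i * rhs i)"
proof -
  \<comment> \<open>inequality \<open>None\<close> is the objective cut \<open>lp_obj Vars cost u \<le> t\<close>, and \<open>Some (i, \<sigma>)\<close>
    is row \<open>i\<close> multiplied by the sign \<open>\<sigma>\<close>; an equality row contributes both signs\<close>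
  define I where "I = insert None (Some ` Sigma Rows (\<lambda>i. sense_signs (sns i)))"
  define a where "a k j = (case k of None \<Rightarrow> - cost j | Some (i, \<sigma>) \<Rightarrow> \<sigma> * lp_coef lhs i j)" for k j
  define r where "r k = (case k of None \<Rightarrow> - t | Some (i, \<sigma>) \<Rightarrow> \<sigma> * rhs i)" for k
  have sum_I: "(\<Sum>k\<in>I. f k) = f None + (\<Sum>i\<in>Rows. \<Sum>\<sigma>\<in>sense_signs (sns i). f (Some (i, \<sigma>)))"
    for f :: "_ \<Rightarrow> real"
    unfolding I_def using assms(2) by (simp add: sum.reindex sum.Sigma)
  have "finite I" unfolding I_def using assms(2) by simp
  moreover have "\<nexists>u. \<forall>k\<in>I. r k \<le> (\<Sum>j\<in>Vars. a k j * u j)"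
  proof
    assume "\<exists>u. \<forall>k\<in>I. r k \<le> (\<Sum>j\<in>Vars. a k j * u j)"
    then obtain u where u: "\<forall>k\<in>I. r k \<le> (\<Sum>j\<in>Vars. a k j * u j)" by blast
    have "(\<Sum>j\<in>Vars. a (Some (i, \<sigma>)) j * u j) = \<sigma> * lhs i u" if "i \<in> Rows" for i \<sigma>
      using assms(3) that unfolding a_def linear_rows_def by (simp add: sum_distrib_left mult.assoc)
    then have "lp_feasible Rows lhs sns rhs u"
      using u unfolding lp_feasible_def sat_iff_signed I_def r_def by auto
    moreover have "lp_obj Vars cost u \<le> t"
      using u unfolding I_def r_def a_def lp_obj_def by (simp add: sum_negf)
    ultimately show False using above by fastforce
  qed
  ultimately obtain l where l0: "\<forall>k\<in>I. 0 \<le> l k" and l1: "\<forall>j\<in>Vars. (\<Sum>k\<in>I. l k * a k j) = 0"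
    and l2: "0 < (\<Sum>k\<in>I. l k * r k)"
    using farkas_lemma[OF assms(1)] by blast
  define mu where "mu i = (\<Sum>\<sigma>\<in>sense_signs (sns i). l (Some (i, \<sigma>)) * \<sigma>)" for i
  show ?thesis
  proof
    show "0 \<le> l None" using l0 unfolding I_def by simp
    show "\<forall>i\<in>Rows. dual_sign_ok (sns i) (mu i)"
      using l0 unfolding mu_def I_def by (auto intro: dual_sign_ok_signed_sum)
    show "\<forall>j\<in>Vars. (\<Sum>i\<in>Rows. mu i * lp_coef lhs i j) = l None * cost j"
      using l1 unfolding sum_I a_def mu_def by (simp add: sum_distrib_left sum_distrib_right algebra_simps)
    show "l None * t < (\<Sum>i\<in>Rows. mu i * rhs i)"
      using l2 unfolding sum_I r_def mu_def by (simp add: sum_distrib_left sum_distrib_right algebra_simps)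
  qed
qed

lemma lp_dual_near_optimal:
  assumes "finite Vars" "finite Rows" "linear_rows Vars Rows lhs"
    and opt: "lp_opt_value Vars Rows lhs sns rhs cost z" and "0 < eps"
  shows "\<exists>mu. dual_feasible Vars Rows lhs sns cost mu \<and> z - eps < dual_obj Rows rhs mu"
proof -
  obtain u0 where u0: "lp_feasible Rows lhs sns rhs u0"
    and z_le: "\<forall>u. lp_feasible Rows lhs sns rhs u \<longrightarrow> z \<le> lp_obj Vars cost u"
    using opt unfolding lp_opt_value_def is_min_def by blast
  then have "\<forall>u. lp_feasible Rows lhs sns rhs u \<longrightarrow> z - eps < lp_obj Vars cost u"
    using \<open>0 < eps\<close> by force
  then obtain l0 mu where l0: "0 \<le> l0" and signs: "\<forall>i\<in>Rows. dual_sign_ok (sns i) (mu i)"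
    and coef: "\<forall>j\<in>Vars. (\<Sum>i\<in>Rows. mu i * lp_coef lhs i j) = l0 * cost j"
    and obj: "l0 * (z - eps) < (\<Sum>i\<in>Rows. mu i * rhs i)"
    using lp_farkas[OF assms(1-3)] by blast
  \<comment> \<open>for \<open>l0 = 0\<close> the multipliers \<open>mu\<close> would certify that the LP is infeasible\<close>
  have "l0 \<noteq> 0"
  proof
    assume "l0 = 0"
    have "mu i * rhs i \<le> mu i * lhs i u0" if "i \<in> Rows" for i
      using dual_sign_ok_slack_nonneg[of "sns i" "mu i" "lhs i u0" "rhs i"] signs u0 that
      unfolding lp_feasible_def by (simp add: right_diff_distrib)
    then have "(\<Sum>i\<in>Rows. mu i * rhs i) \<le> (\<Sum>i\<in>Rows. mu i * lhs i u0)"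
      by (rule sum_mono)
    also have "\<dots> = 0"
      using coef \<open>l0 = 0\<close> by (simp add: linear_rows_combination[OF assms(3)])
    finally show False using obj \<open>l0 = 0\<close> by simp
  qed
  with l0 have "0 < l0" by simp
  have "dual_feasible Vars Rows lhs sns cost (\<lambda>i. mu i / l0)"
    unfolding dual_feasible_iff using signs coef \<open>0 < l0\<close>
    by (auto simp: dual_sign_ok_def divide_nonpos_pos sum_divide_distrib[symmetric])
  moreover have "z - eps < dual_obj Rows rhs (\<lambda>i. mu i / l0)"
    using obj \<open>0 < l0\<close> unfolding dual_obj_def
    by (simp add: sum_divide_distrib[symmetric] pos_less_divide_eq mult.commute)
  ultimately show ?thesis by blast
qed

lemma lp_strong_duality:
  assumes "finite Vars" "finite Rows" "linear_rows Vars Rows lhs"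
    and opt: "lp_opt_value Vars Rows lhs sns rhs cost z"
    and dopt: "dual_optimal Vars Rows lhs sns rhs cost lam"
  shows "dual_obj Rows rhs lam = z"
proof (rule antisym)
  obtain u where "lp_feasible Rows lhs sns rhs u" "z = lp_obj Vars cost u"
    using opt unfolding lp_opt_value_def is_min_def by blast
  then show "dual_obj Rows rhs lam \<le> z"
    using weak_duality[OF assms(3)] dopt unfolding dual_optimal_def by blast
  show "z \<le> dual_obj Rows rhs lam"
  proof (rule field_le_epsilon)
    fix eps :: real assume "0 < eps"
    then obtain mu where "dual_feasible Vars Rows lhs sns cost mu" "z - eps < dual_obj Rows rhs mu"
      using lp_dual_near_optimal[OF assms(1-4)] by blast
    then show "z \<le> dual_obj Rows rhs lam + eps"
      using dopt unfolding dual_optimal_def by fastforce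
  qed
qed

section \<open>The scenario LP and the set \<open>\<Gamma>\<close>\<close>

lemma finite_Edges: "finite (Edges n)"
  by (rule finite_subset[of _ "Pow {0..n}"]) (auto simp: Edges_def)

lemma finite_nsub: "finite (nsub n)"
  by (rule finite_subset[of _ "Pow (Vp n)"]) (auto simp: nsub_def Vp_def)

lemma finite_Vp: "finite (Vp n)"
  by (simp add: Vp_def)

lemma finite_scen: "finite (scen N)"
  by (simp add: scen_def)

lemma setcompr_pair_eq_image: "{f a b |a b. a \<in> A \<and> b \<in> B} = case_prod f ` (A \<times> B)"
  by auto

lemma finite_lp_vars: "finite (lp_vars n N)"
  unfolding lp_vars_def setcompr_pair_eq_image using finite_Edges finite_Vp finite_scen by auto

lemma finite_lp_rows: "finite (lp_rows cvrp n N)"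
  unfolding lp_rows_def setcompr_pair_eq_image using finite_Edges finite_Vp finite_scen finite_nsub
  by auto

lemma lp_vars_iff [simp]:
  "VX e \<in> lp_vars n N \<longleftrightarrow> e \<in> Edges n"
  "VT v \<in> lp_vars n N \<longleftrightarrow> v \<in> Vp n"
  "VY \<xi> v \<in> lp_vars n N \<longleftrightarrow> \<xi> \<in> scen N \<and> v \<in> Vp n"
  unfolding lp_vars_def by auto

lemma lp_rows_iff [simp]:
  "RTh v \<in> lp_rows cvrp n N \<longleftrightarrow> v \<in> Vp n"
  "RCap \<xi> S \<in> lp_rows cvrp n N \<longleftrightarrow> \<xi> \<in> scen N \<and> S \<in> nsub n"
  "RYlo \<xi> v \<in> lp_rows cvrp n N \<longleftrightarrow> \<xi> \<in> scen N \<and> v \<in> Vp n"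
  "RYup \<xi> v \<in> lp_rows cvrp n N \<longleftrightarrow> \<xi> \<in> scen N \<and> v \<in> Vp n"
  "RXlo e \<in> lp_rows cvrp n N \<longleftrightarrow> e \<in> Edges n"
  "RXup e \<in> lp_rows cvrp n N \<longleftrightarrow> e \<in> Edges n"
  "RDeg v \<in> lp_rows cvrp n N \<longleftrightarrow> v \<in> Vp n"
  "RSec S \<in> lp_rows cvrp n N \<longleftrightarrow> S \<in> nsub n"
  "RDep \<in> lp_rows cvrp n N \<longleftrightarrow> cvrp"
  "RRci S \<in> lp_rows cvrp n N \<longleftrightarrow> cvrp \<and> S \<in> nsub n"
  unfolding lp_rows_def by auto

lemma linear_rows_lp_lhs: "linear_rows (lp_vars n N) (lp_rows cvrp n N) (lp_lhs n N p w)"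
  unfolding linear_rows_def lp_coef_def
proof (intro ballI allI)
  fix i u assume i: "i \<in> lp_rows cvrp n N"
  show "lp_lhs n N p w i u = (\<Sum>j\<in>lp_vars n N. lp_lhs n N p w i (\<lambda>j'. if j' = j then 1 else 0) * u j)"
  proof (rule linear_form_expansion[OF finite_lp_vars])
    show "lp_lhs n N p w i u = lp_lhs n N p w i u'" if "\<forall>j\<in>lp_vars n N. u j = u' j" for u u'
      using i that
      by (cases i) (auto simp: inE_def delta_def nsub_def intro!: sum.cong arg_cong2[where f = minus])
    show "lp_lhs n N p w i (\<lambda>j. u j + u' j) = lp_lhs n N p w i u + lp_lhs n N p w i u'" for u u'
      by (cases i) (simp_all add: sum.distrib algebra_simps)
    show "lp_lhs n N p w i (\<lambda>j. c * u j) = c * lp_lhs n N p w i u" for c u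
      by (cases i) (simp_all add: sum_distrib_left algebra_simps)
  qed
qed

lemma lp_obj_lp_cost:
  "lp_obj (lp_vars n N) (lp_cost c) u = (\<Sum>e\<in>Edges n. c e * u (VX e)) + (\<Sum>v\<in>Vp n. u (VT v))"
proof -
  let ?Y = "case_prod VY ` (scen N \<times> Vp n)"
  have "lp_obj (lp_vars n N) (lp_cost c) u =
      (\<Sum>j\<in>VX ` Edges n. lp_cost c j * u j) + (\<Sum>j\<in>VT ` Vp n. lp_cost c j * u j)
      + (\<Sum>j\<in>?Y. lp_cost c j * u j)"
    unfolding lp_obj_def lp_vars_def setcompr_pair_eq_image using finite_Edges finite_Vp finite_scen
    by (subst sum.union_disjoint; auto)+
  also have "(\<Sum>j\<in>?Y. lp_cost c j * u j) = 0"
    by (rule sum.neutral) auto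
  finally show ?thesis
    by (simp add: sum.reindex inj_on_def)
qed

lemma sum_nsub_swap:
  fixes a :: "nat set \<Rightarrow> 'a :: comm_semiring_1"
  shows "(\<Sum>S\<in>nsub n. a S * (\<Sum>v\<in>S. y v)) = (\<Sum>v\<in>Vp n. (\<Sum>S\<in>{S \<in> nsub n. v \<in> S}. a S) * y v)"
proof -
  have "(\<Sum>S\<in>nsub n. a S * (\<Sum>v\<in>S. y v)) = (\<Sum>S\<in>nsub n. \<Sum>v\<in>Vp n. if v \<in> S then a S * y v else 0)"
  proof (rule sum.cong)
    fix S assume "S \<in> nsub n"
    then have "Vp n \<inter> S = S" by (auto simp: nsub_def)
    then show "a S * (\<Sum>v\<in>S. y v) = (\<Sum>v\<in>Vp n. if v \<in> S then a S * y v else 0)"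
      using sum.inter_restrict[OF finite_Vp, of "\<lambda>v. a S * y v" n S] by (simp add: sum_distrib_left)
  qed simp
  also have "\<dots> = (\<Sum>v\<in>Vp n. (\<Sum>S\<in>{S \<in> nsub n. v \<in> S}. a S) * y v)"
    using finite_nsub by (subst sum.swap) (auto simp: sum.inter_filter sum_distrib_right intro!: sum.cong)
  finally show ?thesis .
qed

text \<open>The rows whose multipliers \<open>\<alpha>\<close> and \<open>\<beta>\<close> are aggregated into the single
  constraint of \<open>\<Gamma>\<close>.\<close>

definition aggregated_rows :: "nat \<Rightarrow> nat \<Rightarrow> row set" where
  "aggregated_rows n N =
     {RCap \<xi> S |\<xi> S. \<xi> \<in> scen N \<and> S \<in> nsub n} \<union> {RYup \<xi> v |\<xi> v. \<xi> \<in> scen N \<and> v \<in> Vp n}"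

lemma sum_lp_rows_split:
  "(\<Sum>i\<in>lp_rows cvrp n N. f i) = (\<Sum>i\<in>lp_rows cvrp n N - aggregated_rows n N. f i)
     + (\<Sum>\<xi>\<in>scen N. \<Sum>S\<in>nsub n. f (RCap \<xi> S)) + (\<Sum>\<xi>\<in>scen N. \<Sum>v\<in>Vp n. f (RYup \<xi> v))"
proof -
  have "aggregated_rows n N \<subseteq> lp_rows cvrp n N"
    unfolding aggregated_rows_def by auto
  then have "(\<Sum>i\<in>lp_rows cvrp n N. f i) =
      (\<Sum>i\<in>lp_rows cvrp n N - aggregated_rows n N. f i) + (\<Sum>i\<in>aggregated_rows n N. f i)"
    using sum.subset_diff finite_lp_rows by blast
  also have "(\<Sum>i\<in>aggregated_rows n N. f i) =
      (\<Sum>i\<in>case_prod RCap ` (scen N \<times> nsub n). f i) + (\<Sum>i\<in>case_prod RYup ` (scen N \<times> Vp n). f i)"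
    unfolding aggregated_rows_def setcompr_pair_eq_image using finite_scen finite_nsub finite_Vp
    by (intro sum.union_disjoint) auto
  finally show ?thesis
    by (simp add: sum.reindex inj_on_def sum.cartesian_product prod.case_distrib add.assoc)
qed

lemma aggregated_slack_eq:
  "(\<Sum>\<xi>\<in>scen N. \<Sum>S\<in>nsub n. \<alpha> \<xi> S * (lp_lhs n N p w (RCap \<xi> S) u - lp_rhs N C p d b k (RCap \<xi> S)))
   + (\<Sum>\<xi>\<in>scen N. \<Sum>v\<in>Vp n. \<beta> \<xi> v * (lp_lhs n N p w (RYup \<xi> v) u - lp_rhs N C p d b k (RYup \<xi> v)))
   = (\<Sum>\<xi>\<in>scen N. \<Sum>v\<in>Vp n. (\<beta> \<xi> v + (\<Sum>S\<in>{S \<in> nsub n. v \<in> S}. \<alpha> \<xi> S)) * u (VY \<xi> v))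
     - ((\<Sum>\<xi>\<in>scen N. \<Sum>S\<in>nsub n. \<alpha> \<xi> S * (\<Sum>e\<in>inE n S. u (VX e))) + nu n N C d b \<alpha> \<beta>)"
proof -
  have "(\<Sum>v\<in>Vp n. (\<beta> \<xi> v + (\<Sum>S\<in>{S \<in> nsub n. v \<in> S}. \<alpha> \<xi> S)) * u (VY \<xi> v))
     = (\<Sum>v\<in>Vp n. \<beta> \<xi> v * u (VY \<xi> v)) + (\<Sum>S\<in>nsub n. \<alpha> \<xi> S * (\<Sum>v\<in>S. u (VY \<xi> v)))" for \<xi>
    by (simp add: sum_nsub_swap distrib_right sum.distrib)
  then show ?thesis
    unfolding nu_def
    by (simp add: right_diff_distrib sum_subtractf sum.distrib algebra_simps)
qed

lemma lp_rows_sat_outside_aggregated: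
  assumes "Xset cvrp n N C p d k (\<lambda>e. u (VX e))"
    and "\<forall>\<xi>\<in>scen N. \<forall>v\<in>Vp n. 0 \<le> u (VY \<xi> v)"
    and "\<forall>v\<in>Vp n. (\<Sum>\<xi>\<in>scen N. p \<xi> * w v * u (VY \<xi> v)) \<le> u (VT v)"
    and "i \<in> lp_rows cvrp n N - aggregated_rows n N"
  shows "sat (lp_sense i) (lp_lhs n N p w i u) (lp_rhs N C p d b k i)"
  using assms by (cases i) (auto simp: Xset_def X_cvrp_def X_sub_def aggregated_rows_def split: if_splits)

lemma lp_feasible_imp_Gamma:
  assumes p_nonneg: "\<forall>\<xi>\<in>scen N. 0 \<le> p \<xi>" and w_nonneg: "\<forall>v\<in>Vp n. 0 \<le> w v"
    and \<alpha>_nonneg: "\<forall>\<xi>\<in>scen N. \<forall>S\<in>nsub n. 0 \<le> \<alpha> \<xi> S"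
    and \<beta>_nonpos: "\<forall>\<xi>\<in>scen N. \<forall>v\<in>Vp n. \<beta> \<xi> v \<le> 0"
    and feas: "lp_feasible (lp_rows cvrp n N) (lp_lhs n N p w) lp_sense (lp_rhs N C p d b k) u"
  shows "Xset cvrp n N C p d k (\<lambda>e. u (VX e))"
    and "(\<lambda>v. u (VT v), \<lambda>\<xi> v. u (VY \<xi> v)) \<in> Gamma n N C p d w b \<alpha> \<beta> (\<lambda>e. u (VX e))"
proof -
  have row: "sat (lp_sense i) (lp_lhs n N p w i u) (lp_rhs N C p d b k i)"
    if "i \<in> lp_rows cvrp n N" for i
    using feas that unfolding lp_feasible_def by blast
  show "Xset cvrp n N C p d k (\<lambda>e. u (VX e))"
    unfolding Xset_def X_cvrp_def X_sub_def
    using row[of "RXlo _"] row[of "RXup _"] row[of "RDeg _"] row[of "RSec _"] row[of RDep]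
      row[of "RRci _"]
    by auto
  have y_bounds: "\<forall>\<xi>\<in>scen N. \<forall>v\<in>Vp n. 0 \<le> u (VY \<xi> v) \<and> u (VY \<xi> v) \<le> real (b v)"
    using row[of "RYlo _ _"] row[of "RYup _ _"] by auto
  have \<theta>_bound: "\<forall>v\<in>Vp n. (\<Sum>\<xi>\<in>scen N. p \<xi> * w v * u (VY \<xi> v)) \<le> u (VT v)"
    using row[of "RTh _"] by auto
  moreover have "\<forall>v\<in>Vp n. 0 \<le> (\<Sum>\<xi>\<in>scen N. p \<xi> * w v * u (VY \<xi> v))"
    using p_nonneg w_nonneg y_bounds by (auto intro!: sum_nonneg)
  ultimately have \<theta>_nonneg: "\<forall>v\<in>Vp n. 0 \<le> u (VT v)"
    by (auto intro: order_trans)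
  have "0 \<le> (\<Sum>\<xi>\<in>scen N. \<Sum>S\<in>nsub n. \<alpha> \<xi> S * (lp_lhs n N p w (RCap \<xi> S) u - lp_rhs N C p d b k (RCap \<xi> S)))
     + (\<Sum>\<xi>\<in>scen N. \<Sum>v\<in>Vp n. \<beta> \<xi> v * (lp_lhs n N p w (RYup \<xi> v) u - lp_rhs N C p d b k (RYup \<xi> v)))"
    using \<alpha>_nonneg \<beta>_nonpos row[of "RCap _ _"] row[of "RYup _ _"]
    by (intro add_nonneg_nonneg sum_nonneg) (auto intro!: mult_nonneg_nonneg mult_nonpos_nonpos)
  then show "(\<lambda>v. u (VT v), \<lambda>\<xi> v. u (VY \<xi> v)) \<in> Gamma n N C p d w b \<alpha> \<beta> (\<lambda>e. u (VX e))"
    unfolding aggregated_slack_eq Gamma_def using y_bounds \<theta>_bound \<theta>_nonneg by auto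
qed

lemma Gamma_cost_ge_dual_obj:
  assumes dfeas: "dual_feasible (lp_vars n N) (lp_rows cvrp n N) (lp_lhs n N p w) lp_sense (lp_cost c) lam"
    and \<alpha>: "\<forall>\<xi>\<in>scen N. \<forall>S\<in>nsub n. \<alpha> \<xi> S = lam (RCap \<xi> S)"
    and \<beta>: "\<forall>\<xi>\<in>scen N. \<forall>v\<in>Vp n. \<beta> \<xi> v = lam (RYup \<xi> v)"
    and X: "Xset cvrp n N C p d k x" and \<Gamma>: "(\<theta>, y) \<in> Gamma n N C p d w b \<alpha> \<beta> x"
  shows "dual_obj (lp_rows cvrp n N) (lp_rhs N C p d b k) lam \<le> (\<Sum>e\<in>Edges n. c e * x e) + (\<Sum>v\<in>Vp n. \<theta> v)"
proof -
  let ?u = "case_var x \<theta> y"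
  let ?slack = "\<lambda>i. lam i * (lp_lhs n N p w i ?u - lp_rhs N C p d b k i)"
  have signs: "\<forall>i\<in>lp_rows cvrp n N. dual_sign_ok (lp_sense i) (lam i)"
    using dfeas unfolding dual_feasible_iff by blast
  have "0 \<le> (\<Sum>i\<in>lp_rows cvrp n N - aggregated_rows n N. ?slack i)"
  proof (rule sum_nonneg)
    fix i assume i: "i \<in> lp_rows cvrp n N - aggregated_rows n N"
    have "sat (lp_sense i) (lp_lhs n N p w i ?u) (lp_rhs N C p d b k i)"
      using lp_rows_sat_outside_aggregated[OF _ _ _ i] X \<Gamma> unfolding Gamma_def by auto
    then show "0 \<le> ?slack i" using signs i by (blast intro: dual_sign_ok_slack_nonneg)
  qed
  moreover have "(\<Sum>\<xi>\<in>scen N. \<Sum>S\<in>nsub n. ?slack (RCap \<xi> S)) + (\<Sum>\<xi>\<in>scen N. \<Sum>v\<in>Vp n. ?slack (RYup \<xi> v))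
      = (\<Sum>\<xi>\<in>scen N. \<Sum>S\<in>nsub n. \<alpha> \<xi> S * (lp_lhs n N p w (RCap \<xi> S) ?u - lp_rhs N C p d b k (RCap \<xi> S)))
      + (\<Sum>\<xi>\<in>scen N. \<Sum>v\<in>Vp n. \<beta> \<xi> v * (lp_lhs n N p w (RYup \<xi> v) ?u - lp_rhs N C p d b k (RYup \<xi> v)))"
    using \<alpha> \<beta> by simp
  moreover have "0 \<le> \<dots>"
    using \<Gamma> unfolding aggregated_slack_eq Gamma_def by simp
  moreover have "lp_obj (lp_vars n N) (lp_cost c) ?u =
      dual_obj (lp_rows cvrp n N) (lp_rhs N C p d b k) lam + (\<Sum>i\<in>lp_rows cvrp n N. ?slack i)"
    by (rule lagrangian_identity[OF linear_rows_lp_lhs dfeas])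
  ultimately have "dual_obj (lp_rows cvrp n N) (lp_rhs N C p d b k) lam \<le> lp_obj (lp_vars n N) (lp_cost c) ?u"
    unfolding sum_lp_rows_split[where f = ?slack] by linarith
  then show ?thesis by (simp add: lp_obj_lp_cost)
qed

theorem corollary4:
  fixes n N k :: nat and cvrp :: bool and C :: real
    and c :: "nat set \<Rightarrow> real" and d :: "nat \<Rightarrow> nat \<Rightarrow> real" and p w :: "nat \<Rightarrow> real"
    and b :: "nat \<Rightarrow> nat" and z :: real
    and \<alpha> :: "nat \<Rightarrow> nat set \<Rightarrow> real" and \<beta> :: "nat \<Rightarrow> nat \<Rightarrow> real"
  assumes C_pos: "C > 0"
    and c_nonneg: "\<forall>e\<in>Edges n. c e \<ge> 0"
    and d_nonneg: "\<forall>\<xi>\<in>scen N. \<forall>v\<in>Vp n. 0 \<le> d \<xi> v \<and> d \<xi> v \<le> C"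
    and p_prob: "\<forall>\<xi>\<in>scen N. p \<xi> \<ge> 0" "(\<Sum>\<xi>\<in>scen N. p \<xi>) = 1"
    and w_nonneg: "\<forall>v\<in>Vp n. w v \<ge> 0"
    and opt: "lp_opt_value (lp_vars n N) (lp_rows cvrp n N) (lp_lhs n N p w) lp_sense
                (lp_rhs N C p d b k) (lp_cost c) z"
    and dual: "\<exists>lam. dual_optimal (lp_vars n N) (lp_rows cvrp n N) (lp_lhs n N p w) lp_sense
                        (lp_rhs N C p d b k) (lp_cost c) lam
                   \<and> (\<forall>\<xi>\<in>scen N. \<forall>S\<in>nsub n. \<alpha> \<xi> S = lam (RCap \<xi> S))
                   \<and> (\<forall>\<xi>\<in>scen N. \<forall>v\<in>Vp n. \<beta> \<xi> v = lam (RYup \<xi> v))"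
  shows "is_min {(\<Sum>e\<in>Edges n. c e * x e) + (\<Sum>v\<in>Vp n. \<theta> v) | x \<theta>.
                   Xset cvrp n N C p d k x \<and> (\<exists>y. (\<theta>, y) \<in> Gamma n N C p d w b \<alpha> \<beta> x)} z"
proof -
  obtain lam where dopt: "dual_optimal (lp_vars n N) (lp_rows cvrp n N) (lp_lhs n N p w) lp_sense
      (lp_rhs N C p d b k) (lp_cost c) lam"
    and \<alpha>: "\<forall>\<xi>\<in>scen N. \<forall>S\<in>nsub n. \<alpha> \<xi> S = lam (RCap \<xi> S)"
    and \<beta>: "\<forall>\<xi>\<in>scen N. \<forall>v\<in>Vp n. \<beta> \<xi> v = lam (RYup \<xi> v)"
    using dual by blast
  have dfeas: "dual_feasible (lp_vars n N) (lp_rows cvrp n N) (lp_lhs n N p w) lp_sense (lp_cost c) lam"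
    using dopt unfolding dual_optimal_def by blast
  have z_eq: "dual_obj (lp_rows cvrp n N) (lp_rhs N C p d b k) lam = z"
    using lp_strong_duality[OF finite_lp_vars finite_lp_rows linear_rows_lp_lhs opt dopt] .
  obtain u where feas: "lp_feasible (lp_rows cvrp n N) (lp_lhs n N p w) lp_sense (lp_rhs N C p d b k) u"
    and z_u: "z = lp_obj (lp_vars n N) (lp_cost c) u"
    using opt unfolding lp_opt_value_def is_min_def by blast
  have "\<forall>\<xi>\<in>scen N. \<forall>S\<in>nsub n. 0 \<le> \<alpha> \<xi> S" "\<forall>\<xi>\<in>scen N. \<forall>v\<in>Vp n. \<beta> \<xi> v \<le> 0"
    using dfeas \<alpha> \<beta> by (auto simp: dual_feasible_iff dual_sign_ok_def)
  \<comment> \<open>of the hypotheses on the data only \<open>p \<ge> 0\<close> and \<open>w \<ge> 0\<close> are needed, for \<open>\<theta> \<ge> 0\<close>\<close>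
  note u_in_Gamma = lp_feasible_imp_Gamma[OF p_prob(1) w_nonneg this feas]
  show ?thesis (is "is_min ?A z")
    unfolding is_min_def
  proof (intro conjI ballI)
    show "z \<in> ?A"
      using u_in_Gamma unfolding z_u lp_obj_lp_cost
      by (auto intro!: exI[of _ "\<lambda>e. u (VX e)"] exI[of _ "\<lambda>v. u (VT v)"])
  next
    fix a assume "a \<in> ?A"
    then show "z \<le> a"
      using Gamma_cost_ge_dual_obj[OF dfeas \<alpha> \<beta>, where C = C and d = d and k = k and b = b] z_eq
      by auto
  qed
qed

end
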